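(* In the minor-player mean-field equilibrium, the mean inventory $E(t)=\int q\,m(t,dq)$ is the unique $C^2([0,T])$ solution of the two-point boundary value problem $$2\eta E''(t)+\gamma E'(t)=-\gamma^0\nu^0_t,\quad t\in[0,T],\qquad E(0)=E_0,\qquad E'(T)+\frac{\alpha}{\eta}E(T)=0,$$ and the remaining coefficients are recovered by $\mu_t=E'(t)$, $h_1(t)=2\eta E'(t)-2h_2(t)E(t)$, $h_0(t)=\frac1{4\eta}\int_t^Th_1(s)^2ds$, with $h_2(t)=-\frac{\alpha\eta}{\eta+\alpha(T-t)}$.
   Context: Competitive market with constants $\gamma^0,\gamma,\eta,\alpha>0$, horizon $T$, continuous major lit rate $t\mapsto\nu^0_t$, and initial minor inventory distribution $m_0$ with mean $E_0$. The equilibrium $(h,m,\mu)$ satisfies: $\partial_th+\frac1{4\eta}(\partial_qh)^2+(\gamma^0\nu^0_t+\gamma\mu_t)q=0$, $h(T,q)=-\alpha q^2$; $\partial_tm+\partial_q(m\,\partial_qh/(2\eta))=0$, $m(0)=m_0$; $\mu_t=\int\frac{\partial_qh(t,q)}{2\eta}m(t,dq)$; and $h(t,q)=h_0(t)+h_1(t)q+h_2(t)q^2$ with $h_0(T)=h_1(T)=0$, $h_2(T)=-\alpha$. *)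

theory Defs
  imports "HOL-Probability.Probability"
begin

definition C2_on :: "real \<Rightarrow> (real \<Rightarrow> real) \<Rightarrow> (real \<Rightarrow> real) \<Rightarrow> (real \<Rightarrow> real) \<Rightarrow> bool" where
  "C2_on T f f1 f2 \<longleftrightarrow>
     (\<forall>t\<in>{0..T}. (f has_real_derivative f1 t) (at t within {0..T})
                \<and> (f1 has_real_derivative f2 t) (at t within {0..T}))
     \<and> continuous_on {0..T} f2"

definition mean_BVP ::
  "real \<Rightarrow> real \<Rightarrow> real \<Rightarrow> real \<Rightarrow> real \<Rightarrow> (real \<Rightarrow> real) \<Rightarrow> real
   \<Rightarrow> (real \<Rightarrow> real) \<Rightarrow> (real \<Rightarrow> real) \<Rightarrow> (real \<Rightarrow> real) \<Rightarrow> bool" where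
  "mean_BVP \<gamma>0 \<gamma> \<eta> \<alpha> T \<nu>0 E0 E E1 E2 \<longleftrightarrow>
     C2_on T E E1 E2
     \<and> (\<forall>t\<in>{0..T}. 2 * \<eta> * E2 t + \<gamma> * E1 t = - \<gamma>0 * \<nu>0 t)
     \<and> E 0 = E0
     \<and> E1 T + (\<alpha> / \<eta>) * E T = 0"

end

theory Submission
  imports Defs
begin

text \<open>Substituting the quadratic ansatz into the HJB equation and comparing coefficients of
  \<open>q\<close> gives the Riccati equation \<open>h2' = - h2\<^sup>2 / \<eta>\<close>, a linear equation for \<open>h1\<close> driven by
  \<open>\<gamma>0 \<nu>0 + \<gamma> \<mu>\<close>, and \<open>h0' = - h1\<^sup>2 / (4 \<eta>)\<close>. Testing the continuity equation against
  \<open>\<phi>(q) = q\<close> shows \<open>E' = \<mu>\<close>, and the consistency condition reads \<open>\<mu> = (h1 + 2 h2 E) / (2 \<eta>)\<close>.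
  Differentiating the latter, the terms in \<open>h1 h2\<close> and \<open>h2\<^sup>2 E\<close> cancel and only the forcing
  survives: \<open>2 \<eta> \<mu>' + \<gamma> \<mu> = - \<gamma>0 \<nu>0\<close>. For uniqueness, the difference of two solutions has
  derivative \<open>c exp (- \<gamma> t / (2 \<eta>))\<close> and vanishes at \<open>0\<close>, and the Robin condition at \<open>T\<close>
  forces \<open>c = 0\<close>.\<close>

lemma has_real_derivative_zero_imp_eq:
  fixes f :: "real \<Rightarrow> real"
  assumes "convex S" "\<And>x. x \<in> S \<Longrightarrow> (f has_real_derivative 0) (at x within S)"
    and "s \<in> S" "t \<in> S"
  shows "f s = f t"
  using has_field_derivative_zero_constant[OF assms(1,2)] assms(3,4) by metis

lemma linear_ODE_solution:
  fixes f p P :: "real \<Rightarrow> real"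
  assumes "convex S"
    and f': "\<And>x. x \<in> S \<Longrightarrow> (f has_real_derivative p x * f x) (at x within S)"
    and P': "\<And>x. x \<in> S \<Longrightarrow> (P has_real_derivative p x) (at x within S)"
    and "s \<in> S" "t \<in> S"
  shows "f t = f s * exp (P t - P s)"
proof -
  have "f t * exp (- P t) = f s * exp (- P s)"
    by (rule has_real_derivative_zero_imp_eq[OF \<open>convex S\<close> _ \<open>t \<in> S\<close> \<open>s \<in> S\<close>])
       (auto intro!: derivative_eq_intros f' P')
  then show ?thesis by (simp add: exp_diff exp_minus field_simps)
qed

lemma has_real_derivative_imp_eq_minus_integral:
  fixes f f' :: "real \<Rightarrow> real"
  assumes f': "\<And>s. s \<in> {a..b} \<Longrightarrow> (f has_real_derivative f' s) (at s within {a..b})"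
    and t: "t \<in> {a..b}"
  shows "f t = f b - integral {t..b} f'"
proof -
  have "(f' has_integral f b - f t) {t..b}"
  proof (rule fundamental_theorem_of_calculus)
    show "t \<le> b" using t by simp
    show "(f has_vector_derivative f' s) (at s within {t..b})" if "s \<in> {t..b}" for s
      using DERIV_subset[OF f'[of s]] that t
      by (auto simp: has_real_derivative_iff_has_vector_derivative)
  qed
  then show ?thesis by (simp add: integral_unique)
qed

lemma continuous_on_primitive:
  fixes f F :: "real \<Rightarrow> real"
  assumes F: "\<And>t. t \<in> {a..b} \<Longrightarrow> (f has_integral F t - F a) {a..t}"
  shows "continuous_on {a..b} F"
proof (cases "a \<le> b")
  case True
  then have "f integrable_on {a..b}" using F[of b] by auto
  then have "continuous_on {a..b} (\<lambda>t. F a + integral {a..t} f)"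
    by (intro continuous_intros indefinite_integral_continuous_1)
  then show ?thesis
    by (rule continuous_on_eq) (simp add: integral_unique[OF F])
qed simp

lemma has_real_derivative_primitive:
  fixes f F :: "real \<Rightarrow> real"
  assumes F: "\<And>t. t \<in> {a..b} \<Longrightarrow> (f has_integral F t - F a) {a..t}"
    and "continuous_on {a..b} f" "t \<in> {a..b}"
  shows "(F has_real_derivative f t) (at t within {a..b})"
proof -
  have "((\<lambda>s. F a + integral {a..s} f) has_real_derivative f t) (at t within {a..b})"
    using integral_has_real_derivative[OF assms(2,3)] by (auto intro!: derivative_eq_intros)
  then show ?thesis
    by (rule has_field_derivative_transform_within[of _ _ _ _ 1])
       (use \<open>t \<in> {a..b}\<close> in \<open>auto simp: integral_unique[OF F]\<close>)
qed

lemma (in prob_space) expectation_affine: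
  fixes f :: "'a \<Rightarrow> real"
  assumes "integrable M f"
  shows "(\<integral>x. a + b * f x \<partial>M) = a + b * expectation f"
  using assms by (simp add: prob_space)

lemma deriv_quadratic:
  fixes a b c :: real
  shows "deriv (\<lambda>q. a + b * q + c * q\<^sup>2) q = b + 2 * c * q"
  by (rule DERIV_imp_deriv) (auto intro!: derivative_eq_intros)

lemma has_real_derivative_quadratic_coefficients:
  assumes "\<And>q::real. q \<in> {-1, 0, 1} \<Longrightarrow>
    ((\<lambda>s. a0 s + a1 s * q + a2 s * q\<^sup>2) has_real_derivative b0 + b1 * q + b2 * q\<^sup>2) (at t within S)"
  shows "(a0 has_real_derivative b0) (at t within S)"
    and "(a1 has_real_derivative b1) (at t within S)"
    and "(a2 has_real_derivative b2) (at t within S)"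
proof -
  have m: "((\<lambda>s. a0 s - a1 s + a2 s) has_real_derivative b0 - b1 + b2) (at t within S)"
    using assms[of "-1"] by simp
  have z: "(a0 has_real_derivative b0) (at t within S)"
    using assms[of 0] by simp
  have p: "((\<lambda>s. a0 s + a1 s + a2 s) has_real_derivative b0 + b1 + b2) (at t within S)"
    using assms[of 1] by simp
  show "(a0 has_real_derivative b0) (at t within S)" by (fact z)
  show "(a1 has_real_derivative b1) (at t within S)"
    using DERIV_cdivide[OF DERIV_diff[OF p m], of 2] by simp
  show "(a2 has_real_derivative b2) (at t within S)"
    using DERIV_diff[OF DERIV_cdivide[OF DERIV_add[OF p m], of 2] z] by (simp add: add_divide_distrib)
qed

lemma quadratic_HJB_coefficients:
  fixes h :: "real \<Rightarrow> real \<Rightarrow> real" and \<eta> c :: real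
  assumes h_quad: "\<And>s q. h s q = h0 s + h1 s * q + h2 s * q\<^sup>2"
    and HJB: "\<And>q. \<exists>Dt. ((\<lambda>s. h s q) has_real_derivative Dt) (at t within S)
        \<and> Dt + (1 / (4 * \<eta>)) * (deriv (h t) q)\<^sup>2 + c * q = 0"
  shows "(h0 has_real_derivative - (h1 t)\<^sup>2 / (4 * \<eta>)) (at t within S)"
    and "(h1 has_real_derivative - h1 t * h2 t / \<eta> - c) (at t within S)"
    and "(h2 has_real_derivative - (h2 t)\<^sup>2 / \<eta>) (at t within S)"
proof -
  have derivative_in_q: "((\<lambda>s. h0 s + h1 s * q + h2 s * q\<^sup>2) has_real_derivative
      - (h1 t)\<^sup>2 / (4 * \<eta>) + (- h1 t * h2 t / \<eta> - c) * q + (- (h2 t)\<^sup>2 / \<eta>) * q\<^sup>2) (at t within S)"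
    for q
  proof -
    obtain Dt where Dt: "((\<lambda>s. h s q) has_real_derivative Dt) (at t within S)"
      and eq: "Dt + (1 / (4 * \<eta>)) * (h1 t + 2 * h2 t * q)\<^sup>2 + c * q = 0"
      using HJB[of q] unfolding h_quad deriv_quadratic by blast
    have "Dt = - (h1 t + 2 * h2 t * q)\<^sup>2 / (4 * \<eta>) - c * q"
      using eq by simp
    also have "\<dots> = - (h1 t)\<^sup>2 / (4 * \<eta>) + (- h1 t * h2 t / \<eta> - c) * q + (- (h2 t)\<^sup>2 / \<eta>) * q\<^sup>2"
      by (simp add: power2_eq_square add_divide_distrib diff_divide_distrib algebra_simps)
    finally have "Dt = \<dots>" .
    then show ?thesis using Dt unfolding h_quad by simp
  qed
  show "(h0 has_real_derivative - (h1 t)\<^sup>2 / (4 * \<eta>)) (at t within S)"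
    and "(h1 has_real_derivative - h1 t * h2 t / \<eta> - c) (at t within S)"
    and "(h2 has_real_derivative - (h2 t)\<^sup>2 / \<eta>) (at t within S)"
    by (fact has_real_derivative_quadratic_coefficients[OF derivative_in_q])+
qed

lemma riccati_terminal_value_solution:
  fixes y :: "real \<Rightarrow> real" and \<eta> \<alpha> a b :: real
  assumes "\<eta> > 0" "\<alpha> \<ge> 0"
    and y': "\<And>s. s \<in> {a..b} \<Longrightarrow> (y has_real_derivative - (y s)\<^sup>2 / \<eta>) (at s within {a..b})"
    and "y b = - \<alpha>" "t \<in> {a..b}"
  shows "y t = - \<alpha> * \<eta> / (\<eta> + \<alpha> * (b - t))"
proof -
  have "continuous_on {a..b} y"
    using y' by (meson DERIV_continuous continuous_on_eq_continuous_within)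
  txt \<open>\<open>Q\<close> vanishes at \<open>b\<close> and solves the linear equation \<open>Q' = - (y / \<eta>) Q\<close>.\<close>
  define Q where "Q s = y s * (\<eta> + \<alpha> * (b - s)) + \<alpha> * \<eta>" for s
  have "Q t = Q b * exp ((- integral {a..t} y / \<eta>) - (- integral {a..b} y / \<eta>))"
  proof (rule linear_ODE_solution[where p = "\<lambda>s. - y s / \<eta>"])
    show "(Q has_real_derivative - y s / \<eta> * Q s) (at s within {a..b})" if "s \<in> {a..b}" for s
      unfolding Q_def using \<open>\<eta> > 0\<close>
      by (auto intro!: derivative_eq_intros y' that simp: field_simps power2_eq_square)
    show "((\<lambda>s. - integral {a..s} y / \<eta>) has_real_derivative - y s / \<eta>) (at s within {a..b})"
      if "s \<in> {a..b}" for s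
      using \<open>\<eta> > 0\<close> \<open>continuous_on {a..b} y\<close> that
      by (auto intro!: derivative_eq_intros integral_has_real_derivative)
  qed (use \<open>t \<in> {a..b}\<close> in auto)
  also have "Q b = 0" unfolding Q_def using \<open>y b = - \<alpha>\<close> by simp
  finally have "Q t = 0" by simp
  moreover have "\<eta> + \<alpha> * (b - t) > 0"
    using assms \<open>t \<in> {a..b}\<close> by (simp add: add_pos_nonneg)
  ultimately show ?thesis unfolding Q_def using \<open>\<eta> > 0\<close> by (simp add: field_simps)
qed

lemma mean_BVP_zero_data:
  assumes "\<gamma> > 0" "\<eta> > 0" "\<alpha> \<ge> 0"
    and BVP: "mean_BVP \<gamma>0 \<gamma> \<eta> \<alpha> T (\<lambda>_. 0) 0 D D1 D2"
    and t: "t \<in> {0..T}"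
  shows "D t = 0"
proof -
  define k where "k = \<gamma> / (2 * \<eta>)"
  have "k > 0" using assms by (simp add: k_def)
  have D': "(D has_real_derivative D1 s) (at s within {0..T})"
    and D1': "(D1 has_real_derivative D2 s) (at s within {0..T})" if "s \<in> {0..T}" for s
    using BVP that unfolding mean_BVP_def C2_on_def by auto
  have D2_eq: "D2 s = - k * D1 s" if "s \<in> {0..T}" for s
  proof -
    have "2 * \<eta> * D2 s + \<gamma> * D1 s = 0" using BVP that unfolding mean_BVP_def by auto
    then show ?thesis using \<open>\<eta> > 0\<close> by (simp add: k_def field_simps)
  qed
  have "0 \<in> {0..T}" "T \<in> {0..T}" using t by auto
  define c where "c = D1 0"
  have D1_eq: "D1 s = c * exp (- k * s)" if "s \<in> {0..T}" for s
  proof -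
    have "D1 s = D1 0 * exp (- k * s - - k * 0)"
      using \<open>0 \<in> {0..T}\<close> that D1' D2_eq
      by (intro linear_ODE_solution[where S = "{0..T}" and p = "\<lambda>_. - k"]) (auto intro!: derivative_eq_intros)
    then show ?thesis by (simp add: c_def)
  qed
  have D_eq: "D s = c / k * (1 - exp (- k * s))" if "s \<in> {0..T}" for s
  proof -
    have "D s - c / k * (1 - exp (- k * s)) = D 0 - c / k * (1 - exp (- k * 0))"
      using \<open>k > 0\<close> D' D1_eq
      by (intro has_real_derivative_zero_imp_eq[OF _ _ that \<open>0 \<in> {0..T}\<close>])
         (auto intro!: derivative_eq_intros)
    then show ?thesis using BVP unfolding mean_BVP_def by simp
  qed
  have "c * (exp (- k * T) + \<alpha> / \<eta> / k * (1 - exp (- k * T))) = 0"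
    using BVP D1_eq[OF \<open>T \<in> {0..T}\<close>] D_eq[OF \<open>T \<in> {0..T}\<close>]
    unfolding mean_BVP_def by (simp add: algebra_simps)
  moreover have "exp (- k * T) + \<alpha> / \<eta> / k * (1 - exp (- k * T)) > 0"
    using t assms \<open>k > 0\<close> by (intro add_pos_nonneg) auto
  ultimately have "c = 0" by simp
  then show ?thesis using D_eq[OF t] by simp
qed

lemma mean_BVP_unique:
  assumes "\<gamma> > 0" "\<eta> > 0" "\<alpha> \<ge> 0"
    and "mean_BVP \<gamma>0 \<gamma> \<eta> \<alpha> T \<nu>0 E0 F F1 F2" "mean_BVP \<gamma>0 \<gamma> \<eta> \<alpha> T \<nu>0 E0 G G1 G2"
    and t: "t \<in> {0..T}"
  shows "F t = G t"
proof -
  have "mean_BVP \<gamma>0 \<gamma> \<eta> \<alpha> T (\<lambda>_. 0) 0 (\<lambda>s. F s - G s) (\<lambda>s. F1 s - G1 s) (\<lambda>s. F2 s - G2 s)"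
    using assms(4,5) unfolding mean_BVP_def C2_on_def
    by (auto intro!: derivative_eq_intros continuous_intros simp: algebra_simps)
  from mean_BVP_zero_data[OF assms(1-3) this t] show ?thesis by simp
qed

lemma coefficient_ODEs_imp_mean_BVP:
  fixes h1 h2 \<mu> E \<nu>0 :: "real \<Rightarrow> real"
  assumes "\<eta> > 0" "T \<ge> 0"
    and \<nu>0: "continuous_on {0..T} \<nu>0"
    and h1': "\<And>t. t \<in> {0..T} \<Longrightarrow>
      (h1 has_real_derivative - h1 t * h2 t / \<eta> - (\<gamma>0 * \<nu>0 t + \<gamma> * \<mu> t)) (at t within {0..T})"
    and h2': "\<And>t. t \<in> {0..T} \<Longrightarrow> (h2 has_real_derivative - (h2 t)\<^sup>2 / \<eta>) (at t within {0..T})"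
    and feedback: "\<And>t. t \<in> {0..T} \<Longrightarrow> \<mu> t = (h1 t + 2 * h2 t * E t) / (2 * \<eta>)"
    and mean: "\<And>t. t \<in> {0..T} \<Longrightarrow> (\<mu> has_integral E t - E 0) {0..t}"
    and terminal: "h1 T = 0" "h2 T = - \<alpha>"
  shows "mean_BVP \<gamma>0 \<gamma> \<eta> \<alpha> T \<nu>0 (E 0) E \<mu> (\<lambda>t. - (\<gamma>0 * \<nu>0 t + \<gamma> * \<mu> t) / (2 * \<eta>))"
proof -
  have "continuous_on {0..T} h1" "continuous_on {0..T} h2"
    using h1' h2' by (meson DERIV_continuous continuous_on_eq_continuous_within)+
  moreover have "continuous_on {0..T} E"
    using mean by (rule continuous_on_primitive)
  ultimately have \<mu>_cont: "continuous_on {0..T} \<mu>"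
    using \<open>\<eta> > 0\<close> by (intro continuous_on_eq[OF _ feedback[symmetric]] continuous_intros) auto
  have E': "(E has_real_derivative \<mu> t) (at t within {0..T})" if "t \<in> {0..T}" for t
    using mean \<mu>_cont that by (rule has_real_derivative_primitive)
  have \<mu>': "(\<mu> has_real_derivative - (\<gamma>0 * \<nu>0 t + \<gamma> * \<mu> t) / (2 * \<eta>)) (at t within {0..T})"
    if t: "t \<in> {0..T}" for t
  proof -
    have "((\<lambda>s. (h1 s + 2 * h2 s * E s) / (2 * \<eta>)) has_real_derivative
        (- h1 t * h2 t / \<eta> - (\<gamma>0 * \<nu>0 t + \<gamma> * \<mu> t)
          + 2 * (- (h2 t)\<^sup>2 / \<eta> * E t + h2 t * \<mu> t)) / (2 * \<eta>)) (at t within {0..T})"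
      using \<open>\<eta> > 0\<close> by (auto intro!: derivative_eq_intros h1' h2' E' t simp: field_simps)
    also have "(- h1 t * h2 t / \<eta> - (\<gamma>0 * \<nu>0 t + \<gamma> * \<mu> t)
          + 2 * (- (h2 t)\<^sup>2 / \<eta> * E t + h2 t * \<mu> t)) = - (\<gamma>0 * \<nu>0 t + \<gamma> * \<mu> t)"
      using \<open>\<eta> > 0\<close> by (simp add: feedback[OF t] field_simps power2_eq_square)
    finally show ?thesis
      by (rule has_field_derivative_transform_within[of _ _ _ _ 1]) (use t feedback in auto)
  qed
  have "\<mu> T + \<alpha> / \<eta> * E T = 0"
    using feedback[of T] terminal \<open>\<eta> > 0\<close> \<open>T \<ge> 0\<close> by (simp add: field_simps)
  moreover have "continuous_on {0..T} (\<lambda>t. - (\<gamma>0 * \<nu>0 t + \<gamma> * \<mu> t) / (2 * \<eta>))"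
    using \<open>\<eta> > 0\<close> by (intro continuous_intros \<nu>0 \<mu>_cont) auto
  ultimately show ?thesis
    using E' \<mu>' \<open>\<eta> > 0\<close> unfolding mean_BVP_def C2_on_def by (auto simp: field_simps)
qed

theorem mainTheorem8:
  fixes \<gamma>0 \<gamma> \<eta> \<alpha> T E0 :: real
    and \<nu>0 :: "real \<Rightarrow> real"
    and m0 :: "real measure"
    and h :: "real \<Rightarrow> real \<Rightarrow> real"
    and h0 h1 h2 :: "real \<Rightarrow> real"
    and m :: "real \<Rightarrow> real measure"
    and \<mu> :: "real \<Rightarrow> real"
  assumes pos: "\<gamma>0 > 0" "\<gamma> > 0" "\<eta> > 0" "\<alpha> > 0" "T > 0"
    and nu_cont: "continuous_on {0..T} \<nu>0"
    and m0_prob: "prob_space m0" and m0_sets: "sets m0 = sets borel"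
    and m0_int: "integrable m0 (\<lambda>q. q)"
    and E0_def: "E0 = (\<integral>q. q \<partial>m0)"
    \<comment> \<open>quadratic ansatz and terminal conditions\<close>
    and h_quad: "\<And>t q. h t q = h0 t + h1 t * q + h2 t * q\<^sup>2"
    and h_T: "h0 T = 0" "h1 T = 0" "h2 T = - \<alpha>"
    \<comment> \<open>HJB equation on [0,T]\<close>
    and HJB: "\<And>t q. t \<in> {0..T} \<Longrightarrow>
       \<exists>Dt. ((\<lambda>s. h s q) has_real_derivative Dt) (at t within {0..T})
          \<and> Dt + (1 / (4 * \<eta>)) * (deriv (h t) q)\<^sup>2 + (\<gamma>0 * \<nu>0 t + \<gamma> * \<mu> t) * q = 0"
    \<comment> \<open>the minor inventory distributions\<close>
    and m_init: "m 0 = m0"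
    and m_prob: "\<And>t. t \<in> {0..T} \<Longrightarrow> prob_space (m t)"
    and m_sets: "\<And>t. t \<in> {0..T} \<Longrightarrow> sets (m t) = sets borel"
    and m_int: "\<And>t. t \<in> {0..T} \<Longrightarrow> integrable (m t) (\<lambda>q. q)"
    \<comment> \<open>continuity equation in weak (integrated-in-time) form\<close>
    and FP: "\<And>\<phi> \<phi>' t. (\<And>q. (\<phi> has_real_derivative \<phi>' q) (at q)) \<Longrightarrow> continuous_on UNIV \<phi>'
       \<Longrightarrow> bounded (range \<phi>') \<Longrightarrow> t \<in> {0..T} \<Longrightarrow>
       ((\<lambda>s. \<integral>q. \<phi>' q * (deriv (h s) q / (2 * \<eta>)) \<partial>(m s))
          has_integral ((\<integral>q. \<phi> q \<partial>(m t)) - (\<integral>q. \<phi> q \<partial>m0))) {0..t}"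
    \<comment> \<open>consistency condition\<close>
    and mu_def: "\<And>t. t \<in> {0..T} \<Longrightarrow> \<mu> t = (\<integral>q. deriv (h t) q / (2 * \<eta>) \<partial>(m t))"
  shows "\<exists>E1 E2. mean_BVP \<gamma>0 \<gamma> \<eta> \<alpha> T \<nu>0 E0 (\<lambda>t. \<integral>q. q \<partial>(m t)) E1 E2
     \<and> (\<forall>F F1 F2. mean_BVP \<gamma>0 \<gamma> \<eta> \<alpha> T \<nu>0 E0 F F1 F2
           \<longrightarrow> (\<forall>t\<in>{0..T}. F t = (\<integral>q. q \<partial>(m t))))
     \<and> (\<forall>t\<in>{0..T}.
          \<mu> t = E1 t
        \<and> h2 t = - \<alpha> * \<eta> / (\<eta> + \<alpha> * (T - t))
        \<and> h1 t = 2 * \<eta> * E1 t - 2 * h2 t * (\<integral>q. q \<partial>(m t))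
        \<and> h0 t = (1 / (4 * \<eta>)) * integral {t..T} (\<lambda>s. (h1 s)\<^sup>2))"
proof -
  define E where "E t = (\<integral>q. q \<partial>m t)" for t
  have h_deriv: "deriv (h t) q = h1 t + 2 * h2 t * q" for t q
    by (simp add: h_quad[abs_def] deriv_quadratic)
  have h0': "(h0 has_real_derivative - (h1 t)\<^sup>2 / (4 * \<eta>)) (at t within {0..T})"
    and h1': "(h1 has_real_derivative - h1 t * h2 t / \<eta> - (\<gamma>0 * \<nu>0 t + \<gamma> * \<mu> t)) (at t within {0..T})"
    and h2': "(h2 has_real_derivative - (h2 t)\<^sup>2 / \<eta>) (at t within {0..T})"
    if "t \<in> {0..T}" for t
    by (fact quadratic_HJB_coefficients[OF h_quad HJB[OF that]])+
  have feedback: "\<mu> t = (h1 t + 2 * h2 t * E t) / (2 * \<eta>)" if t: "t \<in> {0..T}" for t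
    using prob_space.expectation_affine[OF m_prob[OF t] m_int[OF t]]
    by (simp add: mu_def[OF t] h_deriv E_def)
  have mean: "(\<mu> has_integral E t - E 0) {0..t}" if t: "t \<in> {0..T}" for t
  proof -
    have "((\<lambda>s. \<integral>q. 1 * (deriv (h s) q / (2 * \<eta>)) \<partial>m s) has_integral E t - E 0) {0..t}"
      using FP[of "\<lambda>q. q" "\<lambda>_. 1" t] t by (simp add: E_def m_init)
    then show ?thesis by (rule has_integral_eq[rotated]) (use t mu_def in auto)
  qed
  have "E 0 = E0" by (simp add: E_def m_init E0_def)
  then have BVP: "mean_BVP \<gamma>0 \<gamma> \<eta> \<alpha> T \<nu>0 E0 E \<mu> (\<lambda>t. - (\<gamma>0 * \<nu>0 t + \<gamma> * \<mu> t) / (2 * \<eta>))"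
    using coefficient_ODEs_imp_mean_BVP[OF _ _ nu_cont h1' h2' feedback mean h_T(2,3)] pos by auto
  show ?thesis
  proof (intro exI conjI allI impI ballI)
    show "mean_BVP \<gamma>0 \<gamma> \<eta> \<alpha> T \<nu>0 E0 (\<lambda>t. \<integral>q. q \<partial>m t) \<mu> (\<lambda>t. - (\<gamma>0 * \<nu>0 t + \<gamma> * \<mu> t) / (2 * \<eta>))"
      using BVP unfolding E_def .
    show "F t = (\<integral>q. q \<partial>m t)" if "mean_BVP \<gamma>0 \<gamma> \<eta> \<alpha> T \<nu>0 E0 F F1 F2" "t \<in> {0..T}" for F F1 F2 t
      using mean_BVP_unique[OF _ _ _ that(1) BVP that(2)] pos unfolding E_def by auto
    fix t assume t: "t \<in> {0..T}"
    show "\<mu> t = \<mu> t" ..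
    show "h2 t = - \<alpha> * \<eta> / (\<eta> + \<alpha> * (T - t))"
      using riccati_terminal_value_solution[OF _ _ h2' h_T(3) t] pos by auto
    show "h1 t = 2 * \<eta> * \<mu> t - 2 * h2 t * (\<integral>q. q \<partial>m t)"
      using feedback[OF t] pos unfolding E_def by (simp add: field_simps)
    show "h0 t = 1 / (4 * \<eta>) * integral {t..T} (\<lambda>s. (h1 s)\<^sup>2)"
      using has_real_derivative_imp_eq_minus_integral[OF h0' t] h_T(1) by simp
  qed
qed

end
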